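(* Let $H$ be a hereditary artin algebra, $n\ge2$, and let $f=\{f^i\}_{i=1}^n\colon X\to Y$ be an irreducible morphism in $\mathbf{C_n}({\rm proj}\,H)$ with $X$ or $Y$ indecomposable. Then: (1) $f$ is of type (ret) if and only if ${\rm Ker}\,f\in\mathbf{C_n}({\rm proj}\,H)\setminus\{0\}$; (2) if $f$ is of type (ret-irred-sec), then ${\rm Ker}\,f=0$.
   Context: For an artin algebra $\Lambda$ and $n\ge 2$, $\mathbf{C_n}({\rm proj}\,\Lambda)$ is the full subcategory of the category of complexes of finitely generated right $\Lambda$-modules consisting of complexes $X=(X^i,d^i_X)$ with $X^i$ projective for all $i$ and $X^i=0$ for $i\notin\{1,\dots,n\}$; morphisms are chain maps $f=\{f^i\}$. Kernels and cokernels are computed degreewise (with induced differentials) in the category of complexes of modules. A morphism in $\mathbf{C_n}({\rm proj}\,\Lambda)$ is irreducible if it is neither a section nor a retraction, and whenever $f=gh$ then $h$ is a section or $g$ is a retraction. Every irreducible $f=\{f^i\}$ in $\mathbf{C_n}({\rm proj}\,\Lambda)$ is of one of the following types: (sec) every $f^i$ is a section in ${\rm proj}\,\Lambda$; (ret) every $f^i$ is a retraction in ${\rm proj}\,\Lambda$; (ret-irred-sec) there is $i$ with $f^i$ irreducible in ${\rm proj}\,\Lambda$, $f^j$ a section for all $j>i$ and $f^j$ a retraction for all $j<i$. *)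

theory Defs
  imports Main "HOL-Library.Function_Algebras"
begin

(* The artin algebra Lambda is the whole type 'a :: ring_1.
   Right Lambda-modules used here are right submodules of the free module
   of finitely supported column vectors  nat => 'a. *)

type_synonym 'a vec = "nat \<Rightarrow> 'a"

definition fvec :: "'a::zero vec set" where
  "fvec = {v. finite {i. v i \<noteq> 0}}"

definition freemod :: "nat \<Rightarrow> 'a::zero vec set" where
  "freemod m = {v. \<forall>i\<ge>m. v i = 0}"

definition rsmult :: "'a::times vec \<Rightarrow> 'a \<Rightarrow> 'a vec" where
  "rsmult v c = (\<lambda>i. v i * c)"

definition submod :: "'a::ring_1 vec set \<Rightarrow> bool" where
  "submod M \<longleftrightarrow> M \<subseteq> fvec \<and> 0 \<in> M \<and> (\<forall>u\<in>M. \<forall>v\<in>M. u + v \<in> M)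
     \<and> (\<forall>v\<in>M. \<forall>c. rsmult v c \<in> M)"

definition hom :: "'a::ring_1 vec set \<Rightarrow> 'a vec set \<Rightarrow> ('a vec \<Rightarrow> 'a vec) set" where
  "hom M N = {f. (\<forall>v\<in>M. f v \<in> N) \<and> (\<forall>u\<in>M. \<forall>v\<in>M. f (u + v) = f u + f v)
     \<and> (\<forall>v\<in>M. \<forall>c. f (rsmult v c) = rsmult (f v) c) \<and> (\<forall>v. v \<notin> M \<longrightarrow> f v = 0)}"

definition idm :: "'a::zero vec set \<Rightarrow> 'a vec \<Rightarrow> 'a vec" where
  "idm M = (\<lambda>v. if v \<in> M then v else 0)"

(* finitely generated projective: split quotient of a free module Lambda^m *)
definition proj_mod :: "'a::ring_1 vec set \<Rightarrow> bool" where
  "proj_mod M \<longleftrightarrow> submod M \<and>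
     (\<exists>m p s. p \<in> hom (freemod m) M \<and> s \<in> hom M (freemod m) \<and> p \<circ> s = idm M)"

definition center :: "'a::ring_1 set" where
  "center = {z. \<forall>x. z * x = x * z}"

definition subring_c :: "'a::ring_1 set \<Rightarrow> bool" where
  "subring_c R \<longleftrightarrow> 0 \<in> R \<and> 1 \<in> R \<and> (\<forall>x\<in>R. \<forall>y\<in>R. x + y \<in> R \<and> x - y \<in> R \<and> x * y \<in> R)"

definition ideal_in :: "'a::ring_1 set \<Rightarrow> 'a set \<Rightarrow> bool" where
  "ideal_in R I \<longleftrightarrow> I \<subseteq> R \<and> 0 \<in> I \<and> (\<forall>x\<in>I. \<forall>y\<in>I. x + y \<in> I)
     \<and> (\<forall>x\<in>I. \<forall>r\<in>R. r * x \<in> I)"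

definition artinian_sub :: "'a::ring_1 set \<Rightarrow> bool" where
  "artinian_sub R \<longleftrightarrow> \<not> (\<exists>I :: nat \<Rightarrow> 'a set. (\<forall>k. ideal_in R (I k)) \<and> (\<forall>k. I (Suc k) \<subset> I k))"

definition artin_algebra :: "'a::ring_1 itself \<Rightarrow> bool" where
  "artin_algebra _ \<longleftrightarrow> (\<exists>R :: 'a set. R \<subseteq> center \<and> subring_c R \<and> artinian_sub R \<and>
     (\<exists>bs :: 'a list. \<forall>x. \<exists>cs. length cs = length bs \<and> set cs \<subseteq> R \<and>
        x = (\<Sum>j<length bs. cs ! j * bs ! j)))"

definition right_ideal :: "'a::ring_1 set \<Rightarrow> bool" where
  "right_ideal I \<longleftrightarrow> 0 \<in> I \<and> (\<forall>x\<in>I. \<forall>y\<in>I. x + y \<in> I) \<and> (\<forall>x\<in>I. \<forall>c. x * c \<in> I)"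

(* a right ideal viewed as a submodule of Lambda^1 (coordinate 0) *)
definition ideal_as_mod :: "'a::ring_1 set \<Rightarrow> 'a vec set" where
  "ideal_as_mod I = {v. v 0 \<in> I \<and> (\<forall>i>0. v i = 0)}"

definition hereditary :: "'a::ring_1 itself \<Rightarrow> bool" where
  "hereditary _ \<longleftrightarrow> (\<forall>I :: 'a set. right_ideal I \<longrightarrow> proj_mod (ideal_as_mod I))"

(* complexes: components X i (i : nat; degree 0 and degrees > n are forced zero), differentials d i : X i -> X (i+1) *)
type_synonym 'a cx = "(nat \<Rightarrow> 'a vec set) \<times> (nat \<Rightarrow> 'a vec \<Rightarrow> 'a vec)"

definition Cn :: "nat \<Rightarrow> 'a::ring_1 cx set" where
  "Cn n = {(X, d). (\<forall>i. proj_mod (X i)) \<and> (\<forall>i. i \<notin> {1..n} \<longrightarrow> X i = {0})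
     \<and> (\<forall>i. d i \<in> hom (X i) (X (Suc i))) \<and> (\<forall>i. d (Suc i) \<circ> d i = (\<lambda>_. 0))}"

definition chmap :: "'a::ring_1 cx \<Rightarrow> 'a cx \<Rightarrow> (nat \<Rightarrow> 'a vec \<Rightarrow> 'a vec) set" where
  "chmap A B = {f. (\<forall>i. f i \<in> hom (fst A i) (fst B i)) \<and> (\<forall>i. f (Suc i) \<circ> snd A i = snd B i \<circ> f i)}"

definition cmp :: "(nat \<Rightarrow> 'a vec \<Rightarrow> 'a vec) \<Rightarrow> (nat \<Rightarrow> 'a vec \<Rightarrow> 'a vec) \<Rightarrow> nat \<Rightarrow> 'a vec \<Rightarrow> 'a vec" where
  "cmp g h = (\<lambda>i. g i \<circ> h i)"

definition cid :: "'a::zero cx \<Rightarrow> nat \<Rightarrow> 'a vec \<Rightarrow> 'a vec" where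
  "cid A = (\<lambda>i. idm (fst A i))"

definition cadd :: "(nat \<Rightarrow> 'a vec \<Rightarrow> 'a::plus vec) \<Rightarrow> (nat \<Rightarrow> 'a vec \<Rightarrow> 'a vec) \<Rightarrow> nat \<Rightarrow> 'a vec \<Rightarrow> 'a vec" where
  "cadd a b = (\<lambda>i v. a i v + b i v)"

definition is_zero_cx :: "'a::zero cx \<Rightarrow> bool" where
  "is_zero_cx A \<longleftrightarrow> (\<forall>i. fst A i = {0})"

definition section_C :: "'a::ring_1 cx \<Rightarrow> 'a cx \<Rightarrow> (nat \<Rightarrow> 'a vec \<Rightarrow> 'a vec) \<Rightarrow> bool" where
  "section_C A B f \<longleftrightarrow> f \<in> chmap A B \<and> (\<exists>r\<in>chmap B A. cmp r f = cid A)"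

definition retraction_C :: "'a::ring_1 cx \<Rightarrow> 'a cx \<Rightarrow> (nat \<Rightarrow> 'a vec \<Rightarrow> 'a vec) \<Rightarrow> bool" where
  "retraction_C A B f \<longleftrightarrow> f \<in> chmap A B \<and> (\<exists>s\<in>chmap B A. cmp f s = cid B)"

definition irreducible_C :: "nat \<Rightarrow> 'a::ring_1 cx \<Rightarrow> 'a cx \<Rightarrow> (nat \<Rightarrow> 'a vec \<Rightarrow> 'a vec) \<Rightarrow> bool" where
  "irreducible_C n A B f \<longleftrightarrow> A \<in> Cn n \<and> B \<in> Cn n \<and> f \<in> chmap A B
     \<and> \<not> section_C A B f \<and> \<not> retraction_C A B f
     \<and> (\<forall>Z\<in>Cn n. \<forall>g\<in>chmap Z B. \<forall>h\<in>chmap A Z. f = cmp g h \<longrightarrow> section_C A Z h \<or> retraction_C Z B g)"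

definition indec_C :: "nat \<Rightarrow> 'a::ring_1 cx \<Rightarrow> bool" where
  "indec_C n A \<longleftrightarrow> A \<in> Cn n \<and> \<not> is_zero_cx A \<and>
     \<not> (\<exists>A1 A2 i1 i2 p1 p2. A1 \<in> Cn n \<and> A2 \<in> Cn n \<and> \<not> is_zero_cx A1 \<and> \<not> is_zero_cx A2
        \<and> i1 \<in> chmap A1 A \<and> i2 \<in> chmap A2 A \<and> p1 \<in> chmap A A1 \<and> p2 \<in> chmap A A2
        \<and> cmp p1 i1 = cid A1 \<and> cmp p2 i2 = cid A2
        \<and> cmp p1 i2 = (\<lambda>_ _. 0) \<and> cmp p2 i1 = (\<lambda>_ _. 0)
        \<and> cadd (cmp i1 p1) (cmp i2 p2) = cid A)"

definition sec_P :: "'a::ring_1 vec set \<Rightarrow> 'a vec set \<Rightarrow> ('a vec \<Rightarrow> 'a vec) \<Rightarrow> bool" where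
  "sec_P M N \<phi> \<longleftrightarrow> \<phi> \<in> hom M N \<and> (\<exists>r\<in>hom N M. r \<circ> \<phi> = idm M)"

definition ret_P :: "'a::ring_1 vec set \<Rightarrow> 'a vec set \<Rightarrow> ('a vec \<Rightarrow> 'a vec) \<Rightarrow> bool" where
  "ret_P M N \<phi> \<longleftrightarrow> \<phi> \<in> hom M N \<and> (\<exists>s\<in>hom N M. \<phi> \<circ> s = idm N)"

definition irred_P :: "'a::ring_1 vec set \<Rightarrow> 'a vec set \<Rightarrow> ('a vec \<Rightarrow> 'a vec) \<Rightarrow> bool" where
  "irred_P M N \<phi> \<longleftrightarrow> proj_mod M \<and> proj_mod N \<and> \<phi> \<in> hom M N
     \<and> \<not> sec_P M N \<phi> \<and> \<not> ret_P M N \<phi>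
     \<and> (\<forall>Z. proj_mod Z \<longrightarrow> (\<forall>g\<in>hom Z N. \<forall>h\<in>hom M Z. \<phi> = g \<circ> h \<longrightarrow> sec_P M Z h \<or> ret_P Z N g))"

definition type_sec :: "nat \<Rightarrow> 'a::ring_1 cx \<Rightarrow> 'a cx \<Rightarrow> (nat \<Rightarrow> 'a vec \<Rightarrow> 'a vec) \<Rightarrow> bool" where
  "type_sec n A B f \<longleftrightarrow> (\<forall>i\<in>{1..n}. sec_P (fst A i) (fst B i) (f i))"

definition type_ret :: "nat \<Rightarrow> 'a::ring_1 cx \<Rightarrow> 'a cx \<Rightarrow> (nat \<Rightarrow> 'a vec \<Rightarrow> 'a vec) \<Rightarrow> bool" where
  "type_ret n A B f \<longleftrightarrow> (\<forall>i\<in>{1..n}. ret_P (fst A i) (fst B i) (f i))"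

definition type_ris :: "nat \<Rightarrow> 'a::ring_1 cx \<Rightarrow> 'a cx \<Rightarrow> (nat \<Rightarrow> 'a vec \<Rightarrow> 'a vec) \<Rightarrow> bool" where
  "type_ris n A B f \<longleftrightarrow> (\<exists>i\<in>{1..n}. irred_P (fst A i) (fst B i) (f i)
     \<and> (\<forall>j\<in>{1..n}. i < j \<longrightarrow> sec_P (fst A j) (fst B j) (f j))
     \<and> (\<forall>j\<in>{1..n}. j < i \<longrightarrow> ret_P (fst A j) (fst B j) (f j)))"

definition kerCx :: "(nat \<Rightarrow> 'a vec \<Rightarrow> 'a vec) \<Rightarrow> 'a::zero cx \<Rightarrow> 'a cx" where
  "kerCx f A = (let K = (\<lambda>i. {v \<in> fst A i. f i v = 0}) in
     (K, \<lambda>i v. if v \<in> K i then snd A i v else 0))"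

end

(*
  Over a hereditary ring every submodule of a projective module is projective. It suffices
  to treat a submodule N of the free module Lambda^(m+1): its last coordinates form a right
  ideal I, which is projective, so the projection N -> I splits and N is a retract of
  (N /\ Lambda^m) (+) I; induct on m. Hence the degreewise kernel and image of a chain map
  f : X -> Y in C_n(proj H) are again objects of C_n(proj H).

  Factor f as X -> Im f -> Y. By irreducibility either X -> Im f is a section, so
  Ker f = 0, or Im f -> Y is a retraction, so every f^i is onto the projective module
  Y^i and hence a retraction. Conversely, if f is of type (ret) and Ker f = 0, every f^i
  is bijective, so f is an isomorphism, which an irreducible morphism is not. Part (2)
  follows because an irreducible f^i is not a retraction.
*)

theory Submission
  imports Defs
begin

section \<open>Submodules and homomorphisms\<close>

lemma sum_fun_apply: "(sum f A) x = (\<Sum>j\<in>A. f j x)"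
  by (induction A rule: infinite_finite_induct) auto

lemma rsmult_apply [simp]: "rsmult v c i = v i * c"
  by (simp add: rsmult_def)

lemma rsmult_zero_left [simp]: "rsmult 0 c = (0::'a::ring_1 vec)"
  and rsmult_zero_right [simp]: "rsmult v 0 = (0::'a::ring_1 vec)"
  and rsmult_one [simp]: "rsmult v 1 = (v::'a::ring_1 vec)"
  by (simp_all add: fun_eq_iff)

lemma rsmult_add_left: "rsmult (u + v) c = rsmult u c + rsmult (v::'a::ring_1 vec) c"
  and rsmult_add_right: "rsmult v (a + b) = rsmult v a + rsmult (v::'a::ring_1 vec) b"
  and rsmult_diff_left: "rsmult (u - v) c = rsmult u c - rsmult (v::'a::ring_1 vec) c"
  and rsmult_minus_one: "rsmult v (-1) = - (v::'a::ring_1 vec)"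
  and rsmult_rsmult: "rsmult (rsmult v a) b = rsmult (v::'a::ring_1 vec) (a * b)"
  by (simp_all add: fun_eq_iff algebra_simps)

lemma rsmult_sum: "rsmult (sum w S) c = (\<Sum>j\<in>S. rsmult (w j) (c::'a::ring_1))"
  by (simp add: fun_eq_iff sum_fun_apply sum_distrib_right)

lemma submod_0: "submod M \<Longrightarrow> 0 \<in> M"
  and submod_add: "submod M \<Longrightarrow> u \<in> M \<Longrightarrow> v \<in> M \<Longrightarrow> u + v \<in> M"
  and submod_rsmult: "submod M \<Longrightarrow> v \<in> M \<Longrightarrow> rsmult v c \<in> M"
  by (simp_all add: submod_def)

lemma submod_diff: "submod M \<Longrightarrow> u \<in> M \<Longrightarrow> v \<in> M \<Longrightarrow> u - v \<in> M"
  by (metis diff_conv_add_uminus rsmult_minus_one submod_add submod_rsmult)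

lemma submod_sum: "submod M \<Longrightarrow> (\<And>j. j \<in> S \<Longrightarrow> w j \<in> M) \<Longrightarrow> sum w S \<in> M"
  by (induction S rule: infinite_finite_induct) (auto simp: submod_0 submod_add)

lemma submod_Int: "submod A \<Longrightarrow> submod B \<Longrightarrow> submod (A \<inter> B)"
  unfolding submod_def by blast

lemma submod_freemod: "submod (freemod m :: 'a::ring_1 vec set)"
proof -
  have "{i. v i \<noteq> 0} \<subseteq> {..<m}" if "v \<in> freemod m" for v :: "'a vec"
    using that by (auto simp: freemod_def not_less[symmetric])
  then have "freemod m \<subseteq> (fvec :: 'a vec set)"
    by (auto simp: fvec_def intro: finite_subset)
  then show ?thesis by (auto simp: submod_def freemod_def)
qed

lemma hom_in: "f \<in> hom M N \<Longrightarrow> v \<in> M \<Longrightarrow> f v \<in> N"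
  and hom_add: "f \<in> hom M N \<Longrightarrow> u \<in> M \<Longrightarrow> v \<in> M \<Longrightarrow> f (u + v) = f u + f v"
  and hom_rsmult: "f \<in> hom M N \<Longrightarrow> v \<in> M \<Longrightarrow> f (rsmult v c) = rsmult (f v) c"
  and hom_out: "f \<in> hom M N \<Longrightarrow> v \<notin> M \<Longrightarrow> f v = 0"
  by (simp_all add: hom_def)

lemma hom_0: "f \<in> hom M N \<Longrightarrow> submod M \<Longrightarrow> f 0 = 0"
  using hom_rsmult[of f M N 0 0] submod_0[of M] by (simp only: rsmult_zero_right)

lemma hom_diff:
  assumes f: "f \<in> hom M N" and M: "submod M" and u: "u \<in> M" and v: "v \<in> M"
  shows "f (u - v) = f u - f v"
proof -
  have "f (u - v) + f v = f u"
    using hom_add[OF f submod_diff[OF M u v] v] by simp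
  then show ?thesis by (simp add: eq_diff_eq)
qed

lemma hom_sum:
  assumes f: "f \<in> hom M N" and M: "submod M" and w: "\<And>j. j \<in> S \<Longrightarrow> w j \<in> M"
  shows "f (sum w S) = (\<Sum>j\<in>S. f (w j))"
  using w
proof (induction S rule: infinite_finite_induct)
  case (insert x F)
  have "f (sum w (insert x F)) = f (w x + sum w F)"
    by (simp only: sum.insert[OF insert.hyps])
  also have "\<dots> = f (w x) + f (sum w F)"
    using insert.prems by (intro hom_add[OF f]) (auto intro: submod_sum[OF M])
  also have "f (sum w F) = (\<Sum>j\<in>F. f (w j))"
    using insert by simp
  finally show ?case
    by (simp only: sum.insert[OF insert.hyps])
qed (simp_all only: sum.infinite sum.empty hom_0[OF f M] not_False_eq_True)

lemma hom_restrictI: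
  assumes M: "submod M"
    and g_in: "\<And>v. v \<in> M \<Longrightarrow> g v \<in> N"
    and g_add: "\<And>u v. u \<in> M \<Longrightarrow> v \<in> M \<Longrightarrow> g (u + v) = g u + g v"
    and g_rsmult: "\<And>v c. v \<in> M \<Longrightarrow> g (rsmult v c) = rsmult (g v) c"
  shows "(\<lambda>v. if v \<in> M then g v else 0) \<in> hom M N"
  unfolding hom_def
proof (intro CollectI conjI ballI allI impI)
  show "(if v \<in> M then g v else 0) \<in> N" if "v \<in> M" for v
    using that g_in by simp
  show "(if u + v \<in> M then g (u + v) else 0) = (if u \<in> M then g u else 0) + (if v \<in> M then g v else 0)"
    if "u \<in> M" "v \<in> M" for u v
    using that g_add submod_add[OF M] by simp
  show "(if rsmult v c \<in> M then g (rsmult v c) else 0) = rsmult (if v \<in> M then g v else 0) c"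
    if "v \<in> M" for v c
    using that g_rsmult submod_rsmult[OF M] by simp
qed simp

lemma hom_codomain_mono: "f \<in> hom M N \<Longrightarrow> (\<And>v. v \<in> M \<Longrightarrow> f v \<in> K) \<Longrightarrow> f \<in> hom M K"
  by (simp add: hom_def)

lemma hom_comp:
  assumes f: "f \<in> hom M N" and g: "g \<in> hom N K" and N: "submod N"
  shows "g \<circ> f \<in> hom M K"
  unfolding hom_def
proof (intro CollectI conjI ballI allI impI)
  show "(g \<circ> f) v \<in> K" if "v \<in> M" for v
    using that hom_in[OF g hom_in[OF f]] by simp
  show "(g \<circ> f) (u + v) = (g \<circ> f) u + (g \<circ> f) v" if "u \<in> M" "v \<in> M" for u v
    using that hom_add[OF f] hom_add[OF g hom_in[OF f] hom_in[OF f]] by simp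
  show "(g \<circ> f) (rsmult v c) = rsmult ((g \<circ> f) v) c" if "v \<in> M" for v c
    using that hom_rsmult[OF f] hom_rsmult[OF g hom_in[OF f]] by simp
  show "(g \<circ> f) v = 0" if "v \<notin> M" for v
    using that hom_out[OF f] hom_0[OF g N] by simp
qed

lemma idm_hom: "submod A \<Longrightarrow> A \<subseteq> B \<Longrightarrow> idm A \<in> hom A B"
  unfolding idm_def by (rule hom_restrictI) (auto simp only: subsetD refl)

lemma hom_eqI:
  assumes f: "f \<in> hom M N" and g: "g \<in> hom M K" and eq: "\<And>v. v \<in> M \<Longrightarrow> f v = g v"
  shows "f = g"
proof
  show "f v = g v" for v
    by (cases "v \<in> M") (simp_all only: eq hom_out[OF f] hom_out[OF g] not_False_eq_True)
qed

lemma hom_eq_idmI: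
  assumes f: "f \<in> hom M N" and eq: "\<And>v. v \<in> M \<Longrightarrow> f v = v"
  shows "f = idm M"
proof
  show "f v = idm M v" for v
    by (cases "v \<in> M") (simp_all only: eq hom_out[OF f] idm_def if_True if_False not_False_eq_True)
qed

lemma comp_eq_idmD: "f \<circ> g = idm M \<Longrightarrow> v \<in> M \<Longrightarrow> f (g v) = v"
  unfolding idm_def by (drule fun_cong[of _ _ v]) simp

lemma hom_image_submod:
  assumes f: "f \<in> hom M K" and K: "submod K" and N: "submod N" and NM: "N \<subseteq> M"
  shows "submod (f ` N)"
  unfolding submod_def
proof (intro conjI ballI allI)
  have "f ` N \<subseteq> K" using hom_in[OF f] NM by blast
  then show "f ` N \<subseteq> fvec" using K unfolding submod_def by blast
  have "f (rsmult 0 0) = rsmult (f 0) 0" using submod_0[OF N] NM by (intro hom_rsmult[OF f]) auto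
  then have "f 0 = 0" by (simp only: rsmult_zero_right)
  then show "0 \<in> f ` N" using submod_0[OF N] by (metis image_eqI)
  show "u + v \<in> f ` N" if uv: "u \<in> f ` N" "v \<in> f ` N" for u v
  proof -
    obtain a b where ab: "a \<in> N" "b \<in> N" "u = f a" "v = f b" using uv by blast
    have "f (a + b) = f a + f b" using ab(1,2) NM by (intro hom_add[OF f]) auto
    then have "u + v = f (a + b)" using ab(3,4) by simp
    then show ?thesis using submod_add[OF N ab(1,2)] by (rule image_eqI)
  qed
  show "rsmult v c \<in> f ` N" if v: "v \<in> f ` N" for v c
  proof -
    obtain a where a: "a \<in> N" "v = f a" using v by blast
    have "f (rsmult a c) = rsmult (f a) c" using a(1) NM by (intro hom_rsmult[OF f]) auto
    then have "rsmult v c = f (rsmult a c)" using a(2) by simp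
    then show ?thesis using submod_rsmult[OF N a(1)] by (rule image_eqI)
  qed
qed

lemma hom_kernel_submod:
  assumes f: "f \<in> hom M N" and M: "submod M"
  shows "submod {v \<in> M. f v = 0}"
  unfolding submod_def
proof (intro conjI ballI allI)
  have "M \<subseteq> fvec" using M by (simp add: submod_def)
  then show "{v \<in> M. f v = 0} \<subseteq> fvec" by blast
  show "0 \<in> {v \<in> M. f v = 0}" using hom_0[OF f M] submod_0[OF M] by simp
  show "u + v \<in> {v \<in> M. f v = 0}" if "u \<in> {v \<in> M. f v = 0}" "v \<in> {v \<in> M. f v = 0}" for u v
    using that hom_add[OF f, of u v] submod_add[OF M, of u v] by simp
  show "rsmult v c \<in> {v \<in> M. f v = 0}" if "v \<in> {v \<in> M. f v = 0}" for v c
    using that hom_rsmult[OF f, of v c] submod_rsmult[OF M, of v c] by simp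
qed

section \<open>Free and projective modules\<close>

definition unit_vec :: "nat \<Rightarrow> 'a::ring_1 vec" where
  "unit_vec j = (\<lambda>i. if i = j then 1 else 0)"

lemma unit_vec_freemod: "j < m \<Longrightarrow> unit_vec j \<in> freemod m"
  by (simp add: unit_vec_def freemod_def)

lemma freemod_unit_vec_expansion:
  assumes x: "x \<in> freemod m"
  shows "(\<Sum>j<m. rsmult (unit_vec j) (x j)) = x"
proof
  fix i
  have "rsmult (unit_vec j) (x j) i = (if i = j then x j else 0)" for j
    by (simp add: unit_vec_def)
  then have "(\<Sum>j<m. rsmult (unit_vec j) (x j)) i = (\<Sum>j<m. if i = j then x j else 0)"
    by (simp add: sum_fun_apply)
  also have "\<dots> = x i"
    using x by (cases "i < m") (auto simp: freemod_def)
  finally show "(\<Sum>j<m. rsmult (unit_vec j) (x j)) i = x i" .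
qed

lemma freemod_hom_eqI:
  fixes f g :: "'a::ring_1 vec \<Rightarrow> 'a vec"
  assumes f: "f \<in> hom (freemod m) N" and g: "g \<in> hom (freemod m) K"
    and basis: "\<And>j. j < m \<Longrightarrow> f (unit_vec j) = g (unit_vec j)"
  shows "f = g"
proof (rule hom_eqI[OF f g])
  fix x :: "'a vec" assume x: "x \<in> freemod m"
  have terms: "rsmult (unit_vec j) (x j) \<in> freemod m" if "j \<in> {..<m}" for j
    using that by (simp add: submod_rsmult[OF submod_freemod] unit_vec_freemod)
  have "f x = f (\<Sum>j<m. rsmult (unit_vec j) (x j))"
    by (simp only: freemod_unit_vec_expansion[OF x])
  also have "\<dots> = (\<Sum>j<m. f (rsmult (unit_vec j) (x j)))"
    by (rule hom_sum[OF f submod_freemod terms])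
  also have "\<dots> = (\<Sum>j<m. g (rsmult (unit_vec j) (x j)))"
    by (intro sum.cong refl) (simp add: hom_rsmult[OF f] hom_rsmult[OF g] unit_vec_freemod basis)
  also have "\<dots> = g (\<Sum>j<m. rsmult (unit_vec j) (x j))"
    by (rule hom_sum[OF g submod_freemod terms, symmetric])
  also have "\<dots> = g x"
    by (simp only: freemod_unit_vec_expansion[OF x])
  finally show "f x = g x" .
qed

lemma freemod_basis_hom:
  assumes M: "submod M" and w: "\<And>j. j < m \<Longrightarrow> w j \<in> M"
  shows "(\<lambda>x. if x \<in> freemod m then \<Sum>j<m. rsmult (w j) (x j) else 0) \<in> hom (freemod m) M"
proof (rule hom_restrictI[OF submod_freemod])
  show "(\<Sum>j<m. rsmult (w j) (x j)) \<in> M" for x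
    using w by (auto intro!: submod_sum[OF M] submod_rsmult[OF M])
  show "(\<Sum>j<m. rsmult (w j) ((u + v) j)) = (\<Sum>j<m. rsmult (w j) (u j)) + (\<Sum>j<m. rsmult (w j) (v j))"
    for u v :: "'a vec"
    by (simp add: rsmult_add_right sum.distrib)
  show "(\<Sum>j<m. rsmult (w j) (rsmult v c j)) = rsmult (\<Sum>j<m. rsmult (w j) (v j)) c" for v c
    by (simp add: rsmult_rsmult rsmult_sum)
qed

lemma proj_mod_freemod: "proj_mod (freemod m :: 'a::ring_1 vec set)"
proof -
  have i: "idm (freemod m) \<in> hom (freemod m) (freemod m :: 'a vec set)"
    by (rule idm_hom[OF submod_freemod subset_refl])
  have "idm (freemod m) \<circ> idm (freemod m) = idm (freemod m :: 'a vec set)"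
    by (rule hom_eq_idmI[OF hom_comp[OF i i submod_freemod]]) (simp add: idm_def)
  then show ?thesis
    unfolding proj_mod_def using submod_freemod i by blast
qed

lemma proj_submod: "proj_mod P \<Longrightarrow> submod P"
  by (simp add: proj_mod_def)

lemma proj_mod_lift:
  assumes P: "proj_mod P" and M: "submod M" and q: "q \<in> hom M P" and surj: "P \<subseteq> q ` M"
  shows "\<exists>\<sigma>\<in>hom P M. q \<circ> \<sigma> = idm P"
proof -
  obtain m p s where p: "p \<in> hom (freemod m) P" and s: "s \<in> hom P (freemod m)" and ps: "p \<circ> s = idm P"
    using P unfolding proj_mod_def by blast
  have "\<exists>x\<in>M. q x = p (unit_vec j)" if "j < m" for j
    using surj hom_in[OF p unit_vec_freemod[OF that]] by (metis image_iff subsetD)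
  then obtain w where w: "\<And>j. j < m \<Longrightarrow> w j \<in> M" and qw: "\<And>j. j < m \<Longrightarrow> q (w j) = p (unit_vec j)"
    by metis
  define \<tau> where "\<tau> x = (if x \<in> freemod m then \<Sum>j<m. rsmult (w j) (x j) else 0)" for x
  have \<tau>: "\<tau> \<in> hom (freemod m) M"
    unfolding \<tau>_def using freemod_basis_hom[OF M w] by simp
  have \<tau>_basis: "\<tau> (unit_vec j) = w j" if "j < m" for j
  proof -
    have "rsmult (w i) (unit_vec j i) = (if i = j then w i else 0)" for i
      by (simp add: unit_vec_def)
    then show ?thesis
      using that by (simp add: \<tau>_def unit_vec_freemod)
  qed
  have "q \<circ> \<tau> = p"
    by (rule freemod_hom_eqI[OF hom_comp[OF \<tau> q M] p]) (simp add: \<tau>_basis qw)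
  then have "q \<circ> (\<tau> \<circ> s) = idm P"
    by (metis comp_assoc ps)
  then show ?thesis
    using hom_comp[OF s \<tau> submod_freemod] by blast
qed

lemma proj_mod_retract:
  assumes P: "proj_mod P" and M: "submod M" and a: "a \<in> hom P M" and b: "b \<in> hom M P"
    and ab: "a \<circ> b = idm M"
  shows "proj_mod M"
proof -
  obtain m p s where p: "p \<in> hom (freemod m) P" and s: "s \<in> hom P (freemod m)" and ps: "p \<circ> s = idm P"
    using P unfolding proj_mod_def by blast
  have ap: "a \<circ> p \<in> hom (freemod m) M" by (rule hom_comp[OF p a proj_submod[OF P]])
  have sb: "s \<circ> b \<in> hom M (freemod m)" by (rule hom_comp[OF b s proj_submod[OF P]])
  have "(a \<circ> p) \<circ> (s \<circ> b) = idm M"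
  proof (rule hom_eq_idmI[OF hom_comp[OF sb ap submod_freemod]])
    show "((a \<circ> p) \<circ> (s \<circ> b)) v = v" if "v \<in> M" for v
      using comp_eq_idmD[OF ps hom_in[OF b that]] comp_eq_idmD[OF ab that] by simp
  qed
  then show ?thesis
    unfolding proj_mod_def using M ap sb by blast
qed

lemma freemod_biproduct:
  obtains \<iota>1 \<iota>2 \<pi>1 \<pi>2
  where "\<iota>1 \<in> hom (freemod m1) (freemod (m1 + m2) :: 'a::ring_1 vec set)"
    and "\<iota>2 \<in> hom (freemod m2) (freemod (m1 + m2) :: 'a vec set)"
    and "\<pi>1 \<in> hom (freemod (m1 + m2)) (freemod m1 :: 'a vec set)"
    and "\<pi>2 \<in> hom (freemod (m1 + m2)) (freemod m2 :: 'a vec set)"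
    and "\<And>a b. a \<in> freemod m1 \<Longrightarrow> b \<in> freemod m2 \<Longrightarrow> \<pi>1 (\<iota>1 a + \<iota>2 b) = a"
    and "\<And>a b. a \<in> freemod m1 \<Longrightarrow> b \<in> freemod m2 \<Longrightarrow> \<pi>2 (\<iota>1 a + \<iota>2 b) = b"
proof -
  let ?F = "freemod (m1 + m2) :: 'a vec set"
  define \<iota>2 where "\<iota>2 b = (if b \<in> freemod m2 then (\<lambda>i. if i < m1 then 0 else b (i - m1)) else 0)"
    for b :: "'a vec"
  define \<pi>1 where "\<pi>1 x = (if x \<in> ?F then (\<lambda>i. if i < m1 then x i else 0) else 0)" for x :: "'a vec"
  define \<pi>2 where "\<pi>2 x = (if x \<in> ?F then (\<lambda>i. x (i + m1)) else 0)" for x :: "'a vec"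
  have \<iota>1: "idm (freemod m1) \<in> hom (freemod m1) ?F"
    by (rule idm_hom[OF submod_freemod]) (auto simp: freemod_def)
  have \<iota>2: "\<iota>2 \<in> hom (freemod m2) ?F"
    unfolding \<iota>2_def by (rule hom_restrictI[OF submod_freemod]) (auto simp: freemod_def fun_eq_iff)
  have \<pi>1: "\<pi>1 \<in> hom ?F (freemod m1)"
    unfolding \<pi>1_def by (rule hom_restrictI[OF submod_freemod]) (auto simp: freemod_def fun_eq_iff)
  have \<pi>2: "\<pi>2 \<in> hom ?F (freemod m2)"
    unfolding \<pi>2_def by (rule hom_restrictI[OF submod_freemod]) (auto simp: freemod_def fun_eq_iff)
  have "idm (freemod m1) a + \<iota>2 b \<in> ?F" if "a \<in> freemod m1" "b \<in> freemod m2" for a b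
    using submod_add[OF submod_freemod hom_in[OF \<iota>1 that(1)] hom_in[OF \<iota>2 that(2)]] .
  then have "\<pi>1 (idm (freemod m1) a + \<iota>2 b) = a" "\<pi>2 (idm (freemod m1) a + \<iota>2 b) = b"
    if "a \<in> freemod m1" "b \<in> freemod m2" for a b
    using that by (auto simp: \<pi>1_def \<pi>2_def \<iota>2_def idm_def freemod_def fun_eq_iff)
  then show thesis
    using that \<iota>1 \<iota>2 \<pi>1 \<pi>2 by blast
qed

lemma hom_plus:
  assumes f: "f \<in> hom M N" and g: "g \<in> hom M N" and N: "submod N"
  shows "(\<lambda>v. f v + g v) \<in> hom M N"
  unfolding hom_def
proof (intro CollectI conjI ballI allI impI)
  show "f v + g v \<in> N" if "v \<in> M" for v
    using that by (simp add: submod_add[OF N] hom_in[OF f] hom_in[OF g])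
  show "f (u + v) + g (u + v) = (f u + g u) + (f v + g v)" if "u \<in> M" "v \<in> M" for u v
    using that by (simp add: hom_add[OF f] hom_add[OF g] ac_simps)
  show "f (rsmult v c) + g (rsmult v c) = rsmult (f v + g v) c" if "v \<in> M" for v c
    using that by (simp add: hom_rsmult[OF f] hom_rsmult[OF g] rsmult_add_left)
  show "f v + g v = 0" if "v \<notin> M" for v
    using that by (simp add: hom_out[OF f] hom_out[OF g])
qed

lemma proj_mod_retract_sum:
  assumes A: "proj_mod A" and B: "proj_mod B" and M: "submod M"
    and \<alpha>: "\<alpha> \<in> hom A M" and \<beta>: "\<beta> \<in> hom B M" and \<rho>: "\<rho> \<in> hom M A" and \<tau>: "\<tau> \<in> hom M B"
    and decomp: "\<And>v. v \<in> M \<Longrightarrow> \<alpha> (\<rho> v) + \<beta> (\<tau> v) = v"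
  shows "proj_mod M"
proof -
  obtain m1 p1 s1 where p1: "p1 \<in> hom (freemod m1) A" and s1: "s1 \<in> hom A (freemod m1)"
    and ps1: "p1 \<circ> s1 = idm A"
    using A unfolding proj_mod_def by blast
  obtain m2 p2 s2 where p2: "p2 \<in> hom (freemod m2) B" and s2: "s2 \<in> hom B (freemod m2)"
    and ps2: "p2 \<circ> s2 = idm B"
    using B unfolding proj_mod_def by blast
  obtain \<iota>1 \<iota>2 \<pi>1 \<pi>2 where \<iota>1: "\<iota>1 \<in> hom (freemod m1) (freemod (m1 + m2) :: 'a vec set)"
    and \<iota>2: "\<iota>2 \<in> hom (freemod m2) (freemod (m1 + m2) :: 'a vec set)"
    and \<pi>1: "\<pi>1 \<in> hom (freemod (m1 + m2)) (freemod m1 :: 'a vec set)"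
    and \<pi>2: "\<pi>2 \<in> hom (freemod (m1 + m2)) (freemod m2 :: 'a vec set)"
    and \<pi>1_\<iota>: "\<And>a b. a \<in> freemod m1 \<Longrightarrow> b \<in> freemod m2 \<Longrightarrow> \<pi>1 (\<iota>1 a + \<iota>2 b) = a"
    and \<pi>2_\<iota>: "\<And>a b. a \<in> freemod m1 \<Longrightarrow> b \<in> freemod m2 \<Longrightarrow> \<pi>2 (\<iota>1 a + \<iota>2 b) = b"
    using freemod_biproduct by metis
  define p where "p x = (\<alpha> \<circ> (p1 \<circ> \<pi>1)) x + (\<beta> \<circ> (p2 \<circ> \<pi>2)) x" for x
  define s where "s v = ((\<iota>1 \<circ> s1) \<circ> \<rho>) v + ((\<iota>2 \<circ> s2) \<circ> \<tau>) v" for v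
  have p: "p \<in> hom (freemod (m1 + m2)) M"
    unfolding p_def
    by (intro hom_plus[OF _ _ M] hom_comp[OF hom_comp[OF \<pi>1 p1 submod_freemod] \<alpha> proj_submod[OF A]]
        hom_comp[OF hom_comp[OF \<pi>2 p2 submod_freemod] \<beta> proj_submod[OF B]])
  have s: "s \<in> hom M (freemod (m1 + m2))"
    unfolding s_def
    by (intro hom_plus[OF _ _ submod_freemod] hom_comp[OF \<rho> hom_comp[OF s1 \<iota>1 submod_freemod] proj_submod[OF A]]
        hom_comp[OF \<tau> hom_comp[OF s2 \<iota>2 submod_freemod] proj_submod[OF B]])
  have "p \<circ> s = idm M"
  proof (rule hom_eq_idmI[OF hom_comp[OF s p submod_freemod]])
    fix v assume v: "v \<in> M"
    have s1v: "s1 (\<rho> v) \<in> freemod m1" and s2v: "s2 (\<tau> v) \<in> freemod m2"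
      using v by (simp_all add: hom_in[OF s1] hom_in[OF s2] hom_in[OF \<rho>] hom_in[OF \<tau>])
    have "p (s v) = \<alpha> (p1 (s1 (\<rho> v))) + \<beta> (p2 (s2 (\<tau> v)))"
      using s1v s2v by (simp add: p_def s_def \<pi>1_\<iota> \<pi>2_\<iota>)
    also have "\<dots> = v"
      using v by (simp add: comp_eq_idmD[OF ps1] comp_eq_idmD[OF ps2] hom_in[OF \<rho>] hom_in[OF \<tau>] decomp)
    finally show "(p \<circ> s) v = v" by simp
  qed
  then show ?thesis
    unfolding proj_mod_def using M p s by blast
qed

section \<open>Hereditary rings\<close>

lemma right_ideal_coordinate_image: "submod N \<Longrightarrow> right_ideal ((\<lambda>v. v k) ` N)"
  unfolding right_ideal_def
proof (intro conjI ballI allI)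
  assume N: "submod N"
  show "0 \<in> (\<lambda>v. v k) ` N"
    using submod_0[OF N] by (force intro: image_eqI[where x = 0])
  show "x + y \<in> (\<lambda>v. v k) ` N" if "x \<in> (\<lambda>v. v k) ` N" "y \<in> (\<lambda>v. v k) ` N" for x y
    using that submod_add[OF N] by (force intro: image_eqI[where x = "_ + _"])
  show "x * c \<in> (\<lambda>v. v k) ` N" if "x \<in> (\<lambda>v. v k) ` N" for x c
    using that submod_rsmult[OF N] by (force intro: image_eqI[where x = "rsmult _ _"])
qed

lemma coordinate_projection_splits:
  assumes H: "hereditary TYPE('a::ring_1)" and N: "submod (N :: 'a vec set)"
  obtains I \<pi> \<sigma> where "proj_mod I" "\<pi> \<in> hom N I" "\<sigma> \<in> hom I N"
    and "\<And>v. v \<in> N \<Longrightarrow> \<sigma> (\<pi> v) k = v k"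
proof -
  define I where "I = ideal_as_mod ((\<lambda>v. v k) ` N)"
  have I: "proj_mod I"
    using H right_ideal_coordinate_image[OF N] by (simp add: hereditary_def I_def)
  define \<pi> where "\<pi> v = (if v \<in> N then (\<lambda>i::nat. if i = 0 then v k else 0) else 0)" for v :: "'a vec"
  have \<pi>: "\<pi> \<in> hom N I"
    unfolding \<pi>_def
    by (rule hom_restrictI[OF N]) (auto simp: I_def ideal_as_mod_def fun_eq_iff)
  have "I \<subseteq> \<pi> ` N"
  proof
    fix y assume y: "y \<in> I"
    then obtain v where v: "v \<in> N" "v k = y 0"
      by (auto simp: I_def ideal_as_mod_def)
    then have "y = \<pi> v"
      using y by (auto simp: \<pi>_def I_def ideal_as_mod_def fun_eq_iff)
    then show "y \<in> \<pi> ` N" using v(1) by (rule image_eqI)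
  qed
  then obtain \<sigma> where \<sigma>: "\<sigma> \<in> hom I N" and \<pi>\<sigma>: "\<pi> \<circ> \<sigma> = idm I"
    using proj_mod_lift[OF I N \<pi>] by blast
  have "\<sigma> (\<pi> v) k = v k" if "v \<in> N" for v
  proof -
    have "\<pi> (\<sigma> (\<pi> v)) 0 = \<pi> v 0"
      using comp_eq_idmD[OF \<pi>\<sigma> hom_in[OF \<pi> that]] by simp
    then show ?thesis
      using hom_in[OF \<sigma> hom_in[OF \<pi> that]] that by (simp add: \<pi>_def)
  qed
  then show thesis using that I \<pi> \<sigma> by blast
qed

lemma proj_mod_submod_freemod_Suc:
  assumes H: "hereditary TYPE('a::ring_1)" and N: "submod N" and NF: "N \<subseteq> freemod (Suc m)"
    and N': "proj_mod (N \<inter> freemod m)"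
  shows "proj_mod (N :: 'a vec set)"
proof -
  obtain I \<pi> \<sigma> where I: "proj_mod I" and \<pi>: "\<pi> \<in> hom N I" and \<sigma>: "\<sigma> \<in> hom I N"
    and \<sigma>_last: "\<And>v. v \<in> N \<Longrightarrow> \<sigma> (\<pi> v) m = v m"
    using coordinate_projection_splits[OF H N] by metis
  define \<rho> where "\<rho> v = (if v \<in> N then v - \<sigma> (\<pi> v) else 0)" for v
  have \<rho>: "\<rho> \<in> hom N (N \<inter> freemod m)"
    unfolding \<rho>_def
  proof (rule hom_restrictI[OF N])
    fix u v c assume u: "u \<in> N" and v: "v \<in> N"
    have \<sigma>\<pi>v: "\<sigma> (\<pi> v) \<in> N" by (rule hom_in[OF \<sigma> hom_in[OF \<pi> v]])
    have "(v - \<sigma> (\<pi> v)) i = 0" if "m \<le> i" for i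
    proof (cases "i = m")
      case True
      then show ?thesis using \<sigma>_last[OF v] by simp
    next
      case False
      with that have "Suc m \<le> i" by simp
      moreover have "v \<in> freemod (Suc m)" "\<sigma> (\<pi> v) \<in> freemod (Suc m)"
        using NF v \<sigma>\<pi>v by auto
      ultimately show ?thesis by (simp add: freemod_def)
    qed
    then show "v - \<sigma> (\<pi> v) \<in> N \<inter> freemod m"
      using submod_diff[OF N v \<sigma>\<pi>v] by (simp add: freemod_def)
    show "u + v - \<sigma> (\<pi> (u + v)) = (u - \<sigma> (\<pi> u)) + (v - \<sigma> (\<pi> v))"
      using u v by (simp add: hom_add[OF \<pi>] hom_add[OF \<sigma>] hom_in[OF \<pi>])
    show "rsmult v c - \<sigma> (\<pi> (rsmult v c)) = rsmult (v - \<sigma> (\<pi> v)) c"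
      using v by (simp add: hom_rsmult[OF \<pi>] hom_rsmult[OF \<sigma>] hom_in[OF \<pi>] rsmult_diff_left)
  qed
  have incl: "idm (N \<inter> freemod m) \<in> hom (N \<inter> freemod m) N"
    by (rule idm_hom[OF proj_submod[OF N']]) blast
  show ?thesis
  proof (rule proj_mod_retract_sum[OF N' I N incl \<sigma> \<rho> \<pi>])
    show "idm (N \<inter> freemod m) (\<rho> v) + \<sigma> (\<pi> v) = v" if "v \<in> N" for v
      using hom_in[OF \<rho> that] that by (simp add: idm_def \<rho>_def)
  qed
qed

lemma proj_mod_submod_freemod:
  assumes H: "hereditary TYPE('a::ring_1)"
  shows "submod N \<Longrightarrow> N \<subseteq> freemod m \<Longrightarrow> proj_mod (N :: 'a vec set)"
proof (induction m arbitrary: N)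
  case 0
  have "freemod 0 = {0 :: 'a vec}"
    by (auto simp: freemod_def)
  moreover have "0 \<in> N"
    by (rule submod_0[OF 0(1)])
  ultimately have "N = freemod 0"
    using 0(2) by auto
  then show ?case
    using proj_mod_freemod by simp
next
  case (Suc m)
  have "proj_mod (N \<inter> freemod m)"
    using Suc.prems by (intro Suc.IH submod_Int submod_freemod) auto
  then show ?case
    using proj_mod_submod_freemod_Suc[OF H Suc.prems] by blast
qed

lemma proj_mod_submod:
  assumes H: "hereditary TYPE('a::ring_1)" and P: "proj_mod P" and N: "submod N" and NP: "N \<subseteq> P"
  shows "proj_mod (N :: 'a vec set)"
proof -
  obtain m p s where p: "p \<in> hom (freemod m) P" and s: "s \<in> hom P (freemod m)" and ps: "p \<circ> s = idm P"
    using P unfolding proj_mod_def by blast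
  have N0: "submod (s ` N)"
    by (rule hom_image_submod[OF s submod_freemod N NP])
  have N0_free: "s ` N \<subseteq> freemod m"
    using hom_in[OF s] NP by blast
  have a: "p \<circ> idm (s ` N) \<in> hom (s ` N) N"
  proof (rule hom_codomain_mono[OF hom_comp[OF idm_hom[OF N0 N0_free] p submod_freemod]])
    show "(p \<circ> idm (s ` N)) x \<in> N" if "x \<in> s ` N" for x
      using that NP by (auto simp: idm_def comp_eq_idmD[OF ps])
  qed
  have b: "s \<circ> idm N \<in> hom N (s ` N)"
  proof (rule hom_codomain_mono[OF hom_comp[OF idm_hom[OF N NP] s proj_submod[OF P]]])
    show "(s \<circ> idm N) v \<in> s ` N" if "v \<in> N" for v
      using that by (simp add: idm_def)
  qed
  have "(p \<circ> idm (s ` N)) \<circ> (s \<circ> idm N) = idm N"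
  proof (rule hom_eq_idmI[OF hom_comp[OF b a N0]])
    show "((p \<circ> idm (s ` N)) \<circ> (s \<circ> idm N)) v = v" if "v \<in> N" for v
      using that NP by (auto simp: idm_def comp_eq_idmD[OF ps])
  qed
  then show ?thesis
    by (rule proj_mod_retract[OF proj_mod_submod_freemod[OF H N0 N0_free] N a b])
qed

section \<open>Complexes\<close>

lemma Cn_iff:
  "X \<in> Cn n \<longleftrightarrow> (\<forall>i. proj_mod (fst X i)) \<and> (\<forall>i. i \<notin> {1..n} \<longrightarrow> fst X i = {0})
     \<and> (\<forall>i. snd X i \<in> hom (fst X i) (fst X (Suc i))) \<and> (\<forall>i. snd X (Suc i) \<circ> snd X i = (\<lambda>_. 0))"
  by (cases X) (simp add: Cn_def)

lemma Cn_proj_mod: "X \<in> Cn n \<Longrightarrow> proj_mod (fst X i)"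
  and Cn_outside: "X \<in> Cn n \<Longrightarrow> i \<notin> {1..n} \<Longrightarrow> fst X i = {0}"
  and Cn_diff_hom: "X \<in> Cn n \<Longrightarrow> snd X i \<in> hom (fst X i) (fst X (Suc i))"
  and Cn_diff_diff: "X \<in> Cn n \<Longrightarrow> snd X (Suc i) (snd X i v) = 0"
  by (simp_all add: Cn_iff) (metis comp_apply)

lemma Cn_submod: "X \<in> Cn n \<Longrightarrow> submod (fst X i)"
  by (rule proj_submod[OF Cn_proj_mod])

lemma cmp_eq_cidD:
  assumes "cmp g f = cid X" and "v \<in> fst X i"
  shows "g i (f i v) = v"
proof -
  have "g i \<circ> f i = idm (fst X i)"
    using fun_cong[OF assms(1), of i] by (simp add: cmp_def cid_def)
  then show ?thesis using assms(2) by (rule comp_eq_idmD)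
qed

lemma chmap_hom: "f \<in> chmap X Y \<Longrightarrow> f i \<in> hom (fst X i) (fst Y i)"
  and chmap_commute: "f \<in> chmap X Y \<Longrightarrow> f (Suc i) (snd X i v) = snd Y i (f i v)"
  by (simp_all add: chmap_def) (metis comp_apply)

definition subcomplex :: "(nat \<Rightarrow> 'a::ring_1 vec set) \<Rightarrow> 'a cx \<Rightarrow> bool" where
  "subcomplex K X \<longleftrightarrow> (\<forall>i. submod (K i) \<and> K i \<subseteq> fst X i \<and> (\<forall>v\<in>K i. snd X i v \<in> K (Suc i)))"

definition subcx :: "(nat \<Rightarrow> 'a vec set) \<Rightarrow> 'a::zero cx \<Rightarrow> 'a cx" where
  "subcx K X = (K, \<lambda>i v. if v \<in> K i then snd X i v else 0)"

lemma kerCx_eq_subcx: "kerCx f X = subcx (\<lambda>i. {v \<in> fst X i. f i v = 0}) X"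
  by (simp add: kerCx_def subcx_def Let_def)

lemma subcx_diff_hom:
  assumes X: "X \<in> Cn n" and K: "subcomplex K X"
  shows "snd (subcx K X) i \<in> hom (K i) (K (Suc i))"
  unfolding subcx_def snd_conv
proof (rule hom_restrictI)
  have KX: "K i \<subseteq> fst X i" using K by (simp add: subcomplex_def)
  show "submod (K i)" using K by (simp add: subcomplex_def)
  show "snd X i v \<in> K (Suc i)" if "v \<in> K i" for v
    using K that by (simp add: subcomplex_def)
  show "snd X i (u + v) = snd X i u + snd X i v" if "u \<in> K i" "v \<in> K i" for u v
    using that KX by (intro hom_add[OF Cn_diff_hom[OF X]]) auto
  show "snd X i (rsmult v c) = rsmult (snd X i v) c" if "v \<in> K i" for v c
    using that KX by (intro hom_rsmult[OF Cn_diff_hom[OF X]]) auto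
qed

lemma subcx_Cn:
  assumes H: "hereditary TYPE('a::ring_1)" and X: "X \<in> Cn n" and K: "subcomplex K (X :: 'a cx)"
  shows "subcx K X \<in> Cn n"
  unfolding Cn_iff
proof (intro conjI allI impI)
  fix i
  have Ki: "submod (K i)" "K i \<subseteq> fst X i" using K by (simp_all add: subcomplex_def)
  show "proj_mod (fst (subcx K X) i)"
    using proj_mod_submod[OF H Cn_proj_mod[OF X] Ki] by (simp add: subcx_def)
  show "fst (subcx K X) i = {0}" if "i \<notin> {1..n}"
    using Ki submod_0[OF Ki(1)] Cn_outside[OF X that] by (auto simp: subcx_def)
  show "snd (subcx K X) i \<in> hom (fst (subcx K X) i) (fst (subcx K X) (Suc i))"
    using subcx_diff_hom[OF X K] by (simp add: subcx_def)
  have "snd (subcx K X) (Suc i) (snd (subcx K X) i v) = 0" for v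
  proof (cases "v \<in> K i")
    case True
    then have "snd X i v \<in> K (Suc i)" using K by (simp add: subcomplex_def)
    then show ?thesis using True Cn_diff_diff[OF X] by (simp add: subcx_def)
  next
    case False
    then show ?thesis
      using hom_0[OF subcx_diff_hom[OF X K]] K by (simp add: subcx_def subcomplex_def)
  qed
  then show "snd (subcx K X) (Suc i) \<circ> snd (subcx K X) i = (\<lambda>_. 0)"
    by (simp add: comp_def)
qed

lemma subcx_inclusion_chmap:
  assumes X: "X \<in> Cn n" and K: "subcomplex K X"
  shows "(\<lambda>i. idm (K i)) \<in> chmap (subcx K X) X"
  unfolding chmap_def
proof (intro CollectI conjI allI)
  fix i
  have Ki: "submod (K i)" "K i \<subseteq> fst X i" using K by (simp_all add: subcomplex_def)
  show "idm (K i) \<in> hom (fst (subcx K X) i) (fst X i)"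
    using idm_hom[OF Ki] by (simp add: subcx_def)
  have "idm (K (Suc i)) (snd (subcx K X) i v) = snd X i (idm (K i) v)" for v
    using K hom_0[OF Cn_diff_hom[OF X] Cn_submod[OF X]] submod_0
    by (simp add: subcx_def idm_def subcomplex_def)
  then show "idm (K (Suc i)) \<circ> snd (subcx K X) i = snd X i \<circ> idm (K i)"
    by (simp add: fun_eq_iff)
qed

lemma chmap_into_subcx:
  assumes X: "X \<in> Cn n" and Y: "Y \<in> Cn n" and f: "f \<in> chmap X Y" and K: "subcomplex K Y"
    and fK: "\<And>i v. v \<in> fst X i \<Longrightarrow> f i v \<in> K i"
  shows "f \<in> chmap X (subcx K Y)"
  unfolding chmap_def
proof (intro CollectI conjI allI)
  fix i
  show "f i \<in> hom (fst X i) (fst (subcx K Y) i)"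
    using hom_codomain_mono[OF chmap_hom[OF f] fK] by (simp add: subcx_def)
  have "f (Suc i) (snd X i v) = snd (subcx K Y) i (f i v)" for v
  proof (cases "v \<in> fst X i")
    case True
    then show ?thesis using fK chmap_commute[OF f] by (simp add: subcx_def)
  next
    case False
    then show ?thesis
      using hom_out[OF Cn_diff_hom[OF X] False] hom_out[OF chmap_hom[OF f] False]
        hom_0[OF chmap_hom[OF f] Cn_submod[OF X]] hom_0[OF subcx_diff_hom[OF Y K]] K
      by (simp add: subcx_def subcomplex_def)
  qed
  then show "f (Suc i) \<circ> snd X i = snd (subcx K Y) i \<circ> f i"
    by (simp add: fun_eq_iff)
qed

lemma kernel_subcomplex:
  assumes X: "X \<in> Cn n" and Y: "Y \<in> Cn n" and f: "f \<in> chmap X Y"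
  shows "subcomplex (\<lambda>i. {v \<in> fst X i. f i v = 0}) X"
  unfolding subcomplex_def
proof (intro allI conjI ballI)
  fix i
  show "submod {v \<in> fst X i. f i v = 0}"
    by (rule hom_kernel_submod[OF chmap_hom[OF f] Cn_submod[OF X]])
  show "{v \<in> fst X i. f i v = 0} \<subseteq> fst X i" by blast
  show "snd X i v \<in> {v \<in> fst X (Suc i). f (Suc i) v = 0}" if "v \<in> {v \<in> fst X i. f i v = 0}" for v
    using that hom_in[OF Cn_diff_hom[OF X]] chmap_commute[OF f] hom_0[OF Cn_diff_hom[OF Y] Cn_submod[OF Y]]
    by simp
qed

lemma image_subcomplex:
  assumes X: "X \<in> Cn n" and Y: "Y \<in> Cn n" and f: "f \<in> chmap X Y"
  shows "subcomplex (\<lambda>i. f i ` fst X i) Y"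
  unfolding subcomplex_def
proof (intro allI conjI ballI)
  fix i
  show "submod (f i ` fst X i)"
    by (rule hom_image_submod[OF chmap_hom[OF f] Cn_submod[OF Y] Cn_submod[OF X] subset_refl])
  show "f i ` fst X i \<subseteq> fst Y i"
    using hom_in[OF chmap_hom[OF f]] by blast
  show "snd Y i y \<in> f (Suc i) ` fst X (Suc i)" if y: "y \<in> f i ` fst X i" for y
  proof -
    obtain x where x: "x \<in> fst X i" "y = f i x" using y by blast
    then have "snd Y i y = f (Suc i) (snd X i x)"
      by (simp add: chmap_commute[OF f])
    then show ?thesis
      using hom_in[OF Cn_diff_hom[OF X] x(1)] by (rule image_eqI)
  qed
qed

lemma kerCx_Cn:
  assumes H: "hereditary TYPE('a::ring_1)" and X: "X \<in> Cn n" and Y: "Y \<in> Cn n"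
    and f: "f \<in> chmap X (Y :: 'a cx)"
  shows "kerCx f X \<in> Cn n"
  unfolding kerCx_eq_subcx by (rule subcx_Cn[OF H X kernel_subcomplex[OF X Y f]])

lemma is_zero_kerCx_iff:
  assumes X: "X \<in> Cn n" and f: "f \<in> chmap X Y"
  shows "is_zero_cx (kerCx f X) \<longleftrightarrow> (\<forall>i. \<forall>v\<in>fst X i. f i v = 0 \<longrightarrow> v = 0)"
  using submod_0[OF Cn_submod[OF X]] hom_0[OF chmap_hom[OF f] Cn_submod[OF X]]
  by (auto simp: is_zero_cx_def kerCx_def Let_def)

section \<open>Irreducible morphisms\<close>

lemma ret_P_if_surjective:
  assumes N: "proj_mod N" and M: "submod M" and \<phi>: "\<phi> \<in> hom M N" and surj: "N \<subseteq> \<phi> ` M"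
  shows "ret_P M N \<phi>"
  using proj_mod_lift[OF N M \<phi> surj] \<phi> by (auto simp: ret_P_def)

lemma ret_P_injective_inverse:
  assumes M: "submod M" and N: "submod N" and \<phi>: "ret_P M N \<phi>"
    and inj: "\<And>v. v \<in> M \<Longrightarrow> \<phi> v = 0 \<Longrightarrow> v = 0"
  obtains \<psi> where "\<psi> \<in> hom N M" "\<psi> \<circ> \<phi> = idm M" "\<phi> \<circ> \<psi> = idm N"
proof -
  obtain \<psi> where \<psi>: "\<psi> \<in> hom N M" and \<phi>\<psi>: "\<phi> \<circ> \<psi> = idm N"
    using \<phi> by (auto simp: ret_P_def)
  have \<phi>_hom: "\<phi> \<in> hom M N" using \<phi> by (simp add: ret_P_def)
  have "\<psi> \<circ> \<phi> = idm M"
  proof (rule hom_eq_idmI[OF hom_comp[OF \<phi>_hom \<psi> N]])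
    fix v assume v: "v \<in> M"
    have \<psi>\<phi>v: "\<psi> (\<phi> v) \<in> M" by (rule hom_in[OF \<psi> hom_in[OF \<phi>_hom v]])
    have "\<phi> (\<psi> (\<phi> v) - v) = 0"
      using hom_diff[OF \<phi>_hom M \<psi>\<phi>v v] comp_eq_idmD[OF \<phi>\<psi> hom_in[OF \<phi>_hom v]] by simp
    then have "\<psi> (\<phi> v) - v = 0"
      using inj submod_diff[OF M \<psi>\<phi>v v] by blast
    then show "(\<psi> \<circ> \<phi>) v = v" by simp
  qed
  then show thesis using that \<psi> \<phi>\<psi> by blast
qed

lemma chmap_degreewise_inverse:
  assumes X: "X \<in> Cn n" and Y: "Y \<in> Cn n" and f: "f \<in> chmap X Y"
    and g: "\<And>i. g i \<in> hom (fst Y i) (fst X i)"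
    and gf: "\<And>i. g i \<circ> f i = idm (fst X i)" and fg: "\<And>i. f i \<circ> g i = idm (fst Y i)"
  shows "g \<in> chmap Y X"
  unfolding chmap_def
proof (intro CollectI conjI allI)
  fix i
  show "g i \<in> hom (fst Y i) (fst X i)" by (rule g)
  show "g (Suc i) \<circ> snd Y i = snd X i \<circ> g i"
  proof (rule hom_eqI)
    show "g (Suc i) \<circ> snd Y i \<in> hom (fst Y i) (fst X (Suc i))"
      by (rule hom_comp[OF Cn_diff_hom[OF Y] g Cn_submod[OF Y]])
    show "snd X i \<circ> g i \<in> hom (fst Y i) (fst X (Suc i))"
      by (rule hom_comp[OF g Cn_diff_hom[OF X] Cn_submod[OF X]])
    fix y assume y: "y \<in> fst Y i"
    have x: "g i y \<in> fst X i" by (rule hom_in[OF g y])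
    have "snd Y i y = f (Suc i) (snd X i (g i y))"
      using chmap_commute[OF f] comp_eq_idmD[OF fg y] by metis
    then show "(g (Suc i) \<circ> snd Y i) y = (snd X i \<circ> g i) y"
      using comp_eq_idmD[OF gf hom_in[OF Cn_diff_hom[OF X] x]] by simp
  qed
qed

lemma section_C_if_ret_P_ker_zero:
  assumes X: "X \<in> Cn n" and Y: "Y \<in> Cn n" and f: "f \<in> chmap X Y"
    and ret: "\<And>i. ret_P (fst X i) (fst Y i) (f i)" and ker: "is_zero_cx (kerCx f X)"
  shows "section_C X Y f"
proof -
  have "\<exists>\<psi>. \<psi> \<in> hom (fst Y i) (fst X i) \<and> \<psi> \<circ> f i = idm (fst X i) \<and> f i \<circ> \<psi> = idm (fst Y i)" for i
    using ker ret_P_injective_inverse[OF Cn_submod[OF X] Cn_submod[OF Y] ret]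
    unfolding is_zero_kerCx_iff[OF X f] by metis
  then obtain g where g: "\<And>i. g i \<in> hom (fst Y i) (fst X i)"
    and gf: "\<And>i. g i \<circ> f i = idm (fst X i)" and fg: "\<And>i. f i \<circ> g i = idm (fst Y i)"
    by metis
  have "cmp g f = cid X"
    using gf by (simp add: cmp_def cid_def)
  then show ?thesis
    using f chmap_degreewise_inverse[OF X Y f g gf fg] by (auto simp: section_C_def)
qed

lemma type_ret_ret_P:
  assumes X: "X \<in> Cn n" and Y: "Y \<in> Cn n" and f: "f \<in> chmap X Y" and ret: "type_ret n X Y f"
  shows "ret_P (fst X i) (fst Y i) (f i)"
proof (cases "i \<in> {1..n}")
  case True
  then show ?thesis using ret by (simp add: type_ret_def)
next
  case False
  have "f i 0 = 0" by (rule hom_0[OF chmap_hom[OF f] Cn_submod[OF X]])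
  then have "fst Y i \<subseteq> f i ` fst X i"
    using Cn_outside[OF X False] Cn_outside[OF Y False] by simp
  then show ?thesis
    by (rule ret_P_if_surjective[OF Cn_proj_mod[OF Y] Cn_submod[OF X] chmap_hom[OF f]])
qed

lemma irreducible_C_ker_zero_or_surjective:
  assumes H: "hereditary TYPE('a::ring_1)" and irr: "irreducible_C n X (Y :: 'a cx) f"
  shows "is_zero_cx (kerCx f X) \<or> (\<forall>i. fst Y i \<subseteq> f i ` fst X i)"
proof -
  have X: "X \<in> Cn n" and Y: "Y \<in> Cn n" and f: "f \<in> chmap X Y"
    using irr by (simp_all add: irreducible_C_def)
  define Z where "Z = subcx (\<lambda>i. f i ` fst X i) Y"
  have im: "subcomplex (\<lambda>i. f i ` fst X i) Y" by (rule image_subcomplex[OF X Y f])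
  have Z: "Z \<in> Cn n" unfolding Z_def by (rule subcx_Cn[OF H Y im])
  have f': "f \<in> chmap X Z" unfolding Z_def by (rule chmap_into_subcx[OF X Y f im]) blast
  define j where "j i = idm (f i ` fst X i)" for i
  have j: "j \<in> chmap Z Y"
    unfolding Z_def j_def by (rule subcx_inclusion_chmap[OF Y im])
  have "f = cmp j f"
    using hom_out[OF chmap_hom[OF f]] by (auto simp: cmp_def j_def idm_def fun_eq_iff)
  then have "section_C X Z f \<or> retraction_C Z Y j"
    using irr Z j f' unfolding irreducible_C_def by blast
  then show ?thesis
  proof
    assume "section_C X Z f"
    then obtain r where r: "r \<in> chmap Z X" and rf: "cmp r f = cid X"
      by (auto simp: section_C_def)
    have "v = 0" if v: "v \<in> fst X i" and fv: "f i v = 0" for i v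
    proof -
      have "r i (f i v) = v" by (rule cmp_eq_cidD[OF rf v])
      then show ?thesis
        using fv hom_0[OF chmap_hom[OF r] Cn_submod[OF Z]] by simp
    qed
    then show ?thesis
      using is_zero_kerCx_iff[OF X f] by blast
  next
    assume "retraction_C Z Y j"
    then obtain s where s: "s \<in> chmap Y Z" and js: "cmp j s = cid Y"
      by (auto simp: retraction_C_def)
    have "y \<in> f i ` fst X i" if "y \<in> fst Y i" for i y
    proof -
      have "j i (s i y) = y" by (rule cmp_eq_cidD[OF js that])
      then show ?thesis
        using hom_in[OF chmap_hom[OF s] that] by (simp add: Z_def subcx_def j_def idm_def)
    qed
    then show ?thesis by blast
  qed
qed

lemma irreducible_C_type_ret_if_ker_nonzero:
  assumes H: "hereditary TYPE('a::ring_1)" and irr: "irreducible_C n X (Y :: 'a cx) f"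
    and ker: "\<not> is_zero_cx (kerCx f X)"
  shows "type_ret n X Y f"
proof -
  have X: "X \<in> Cn n" and Y: "Y \<in> Cn n" and f: "f \<in> chmap X Y"
    using irr by (simp_all add: irreducible_C_def)
  have "fst Y i \<subseteq> f i ` fst X i" for i
    using irreducible_C_ker_zero_or_surjective[OF H irr] ker by blast
  then show ?thesis
    unfolding type_ret_def
    using ret_P_if_surjective[OF Cn_proj_mod[OF Y] Cn_submod[OF X] chmap_hom[OF f]] by blast
qed

theorem proposition2p5:
  fixes n :: nat and X Y :: "'a::ring_1 cx" and f :: "nat \<Rightarrow> 'a vec \<Rightarrow> 'a vec"
  assumes "artin_algebra TYPE('a)" and "hereditary TYPE('a)" and "n \<ge> 2"
    and "X \<in> Cn n" and "Y \<in> Cn n"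
    and "irreducible_C n X Y f"
    and "indec_C n X \<or> indec_C n Y"
  shows "(type_ret n X Y f \<longleftrightarrow> (kerCx f X \<in> Cn n \<and> \<not> is_zero_cx (kerCx f X)))
       \<and> (type_ris n X Y f \<longrightarrow> is_zero_cx (kerCx f X))"
proof -
  note H = assms(2) and X = assms(4) and Y = assms(5) and irr = assms(6)
  have f: "f \<in> chmap X Y" and not_section: "\<not> section_C X Y f"
    using irr by (simp_all add: irreducible_C_def)
  have ret_iff: "type_ret n X Y f \<longleftrightarrow> \<not> is_zero_cx (kerCx f X)"
  proof
    assume "type_ret n X Y f"
    then show "\<not> is_zero_cx (kerCx f X)"
      using section_C_if_ret_P_ker_zero[OF X Y f type_ret_ret_P[OF X Y f]] not_section by blast
  next
    assume "\<not> is_zero_cx (kerCx f X)"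
    then show "type_ret n X Y f"
      by (rule irreducible_C_type_ret_if_ker_nonzero[OF H irr])
  qed
  moreover have "type_ris n X Y f \<Longrightarrow> \<not> type_ret n X Y f"
    by (auto simp: type_ris_def type_ret_def irred_P_def)
  ultimately show ?thesis
    using kerCx_Cn[OF H X Y f] by blast
qed

end
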